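(* The LCM matrix $[S]$ is invertible for every finite GCD closed $\wedge$-tree set $S$ of positive integers.
   Context: $S$ is GCD closed if $\gcd(x,y)\in S$ for all $x,y\in S$. A set $S$ is a $\wedge$-tree set if the Hasse diagram of its meet closure (here, since $S$ is GCD closed, of $(S,\mid)$ itself) is a tree. The LCM matrix $[S]$ of $S=\{x_1,\dots,x_n\}$ has $(i,j)$ entry $\mathrm{lcm}(x_i,x_j)$. *)

theory Defs
  imports Main "Jordan_Normal_Form.Matrix" "Jordan_Normal_Form.Determinant"
begin

definition gcd_closed :: "nat set \<Rightarrow> bool" where
  "gcd_closed S \<longleftrightarrow> (\<forall>x\<in>S. \<forall>y\<in>S. gcd x y \<in> S)"

definition meet_closure :: "nat set \<Rightarrow> nat set" where
  "meet_closure S = \<Inter>{T. S \<subseteq> T \<and> gcd_closed T}"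

definition covers :: "nat set \<Rightarrow> nat \<Rightarrow> nat \<Rightarrow> bool" where
  "covers S x y \<longleftrightarrow> x \<in> S \<and> y \<in> S \<and> x \<noteq> y \<and> x dvd y \<and>
     \<not> (\<exists>z\<in>S. z \<noteq> x \<and> z \<noteq> y \<and> x dvd z \<and> z dvd y)"

definition hasse_adj :: "nat set \<Rightarrow> nat \<Rightarrow> nat \<Rightarrow> bool" where
  "hasse_adj S x y \<longleftrightarrow> covers S x y \<or> covers S y x"

definition hasse_connected :: "nat set \<Rightarrow> bool" where
  "hasse_connected S \<longleftrightarrow> (\<forall>x\<in>S. \<forall>y\<in>S. (hasse_adj S)\<^sup>*\<^sup>* x y)"

definition hasse_has_cycle :: "nat set \<Rightarrow> bool" where
  "hasse_has_cycle S \<longleftrightarrow> (\<exists>vs. length vs \<ge> 3 \<and> distinct vs \<and>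
     (\<forall>i < length vs. hasse_adj S (vs ! i) (vs ! ((i + 1) mod length vs))))"

definition hasse_is_tree :: "nat set \<Rightarrow> bool" where
  "hasse_is_tree S \<longleftrightarrow> hasse_connected S \<and> \<not> hasse_has_cycle S"

definition wedge_tree_set :: "nat set \<Rightarrow> bool" where
  "wedge_tree_set S \<longleftrightarrow> hasse_is_tree (meet_closure S)"

definition lcm_matrix :: "nat set \<Rightarrow> real mat" where
  "lcm_matrix S = (let xs = sorted_list_of_set S; n = length xs in
     mat n n (\<lambda>(i, j). real (lcm (xs ! i) (xs ! j))))"

end

theory Submission
  imports Defs
begin

text \<open>
  If \<open>f\<close> is a real function on \<open>S\<close> with \<open>\<Sum>{f z | z \<in> S, z dvd y} = 1/y\<close> for all \<open>y \<in> S\<close>,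
  then for GCD closed \<open>S\<close>
  \<open>lcm x\<^sub>i x\<^sub>j = x\<^sub>i x\<^sub>j / gcd x\<^sub>i x\<^sub>j = \<Sum>\<^sub>k [x\<^sub>k dvd x\<^sub>i] x\<^sub>i f(x\<^sub>k) \<cdot> [x\<^sub>k dvd x\<^sub>j] x\<^sub>j\<close>,
  which factors \<open>[S]\<close> into a lower and an upper triangular matrix with diagonals
  \<open>x\<^sub>i f(x\<^sub>i)\<close> and \<open>x\<^sub>i\<close>; so \<open>[S]\<close> is invertible as soon as \<open>f\<close> vanishes nowhere on \<open>S\<close>.
  When the Hasse diagram of \<open>S\<close> is a tree, every non-minimal \<open>y \<in> S\<close> has a unique lower
  cover \<open>p\<close> (two covers and their gcd would close a cycle), and all proper divisors of \<open>y\<close>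
  in \<open>S\<close> divide \<open>p\<close>. Hence \<open>f(y) = 1/y - 1/p\<close> (resp. \<open>1/y\<close> for minimal \<open>y\<close>) satisfies
  the divisor sums by telescoping along the chain of lower covers, and is never zero.
\<close>

lemma meet_closure_gcd_closed: "gcd_closed S \<Longrightarrow> meet_closure S = S"
  unfolding meet_closure_def by blast

lemma successively_cyclic_nth:
  assumes "successively R vs" "R (last vs) (hd vs)" "vs \<noteq> []"
  shows "\<forall>i<length vs. R (vs!i) (vs!((i+1) mod length vs))"
proof (intro allI impI)
  fix i assume i: "i < length vs"
  show "R (vs!i) (vs!((i+1) mod length vs))"
  proof (cases "Suc i < length vs")
    case True
    then show ?thesis using assms(1) successively_nth by fastforce
  next
    case False
    hence "Suc i = length vs" using i by simp
    hence "i = length vs - 1" "(i+1) mod length vs = 0" by auto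
    then show ?thesis using assms(2,3) by (simp add: last_conv_nth hd_conv_nth)
  qed
qed

subsection \<open>Lower covers in a finite set of positive integers\<close>

lemma exists_lower_cover_above:
  assumes fin: "finite S" and pos: "\<forall>x\<in>S. x > 0"
    and "y \<in> S" "z \<in> S" "z dvd y" "z \<noteq> y"
  obtains c where "covers S c y" "z dvd c"
proof -
  define W where "W = {w\<in>S. z dvd w \<and> w dvd y \<and> w \<noteq> y}"
  have finW: "finite W" using fin by (auto simp: W_def)
  have "z \<in> W" using assms by (auto simp: W_def)
  hence cW: "Max W \<in> W" using Max_in finW by blast
  have "\<not> (\<exists>u\<in>S. u \<noteq> Max W \<and> u \<noteq> y \<and> Max W dvd u \<and> u dvd y)"
  proof
    assume "\<exists>u\<in>S. u \<noteq> Max W \<and> u \<noteq> y \<and> Max W dvd u \<and> u dvd y"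
    then obtain u where u: "u \<in> S" "u \<noteq> Max W" "u \<noteq> y" "Max W dvd u" "u dvd y" by blast
    have "u \<in> W" using u cW by (auto simp: W_def intro: dvd_trans)
    hence "u \<le> Max W" using finW by simp
    moreover have "Max W \<le> u" using u pos by (auto intro: dvd_imp_le)
    ultimately show False using u by simp
  qed
  hence "covers S (Max W) y" unfolding covers_def using cW \<open>y \<in> S\<close> by (auto simp: W_def)
  with cW that show ?thesis by (auto simp: W_def)
qed

lemma exists_covers_chain:
  assumes fin: "finite S" and pos: "\<forall>x\<in>S. x > 0" and "m \<in> S"
  shows "a \<in> S \<Longrightarrow> m dvd a \<Longrightarrow> \<exists>cs. cs \<noteq> [] \<and> hd cs = m \<and> last cs = a \<and>
     successively (covers S) cs \<and> sorted_wrt (<) cs \<and> (\<forall>z\<in>set cs. m dvd z \<and> z dvd a \<and> z \<in> S)"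
proof (induction a rule: less_induct)
  case (less a)
  show ?case
  proof (cases "a = m")
    case True
    then show ?thesis using \<open>m \<in> S\<close> by (intro exI[of _ "[m]"]) auto
  next
    case False
    obtain w where w: "covers S w a" "m dvd w"
      using exists_lower_cover_above[OF fin pos less.prems(1) \<open>m \<in> S\<close> less.prems(2)] False by metis
    have wd: "w dvd a" "w \<noteq> a" "w \<in> S" using w by (auto simp: covers_def)
    have "a > 0" using pos less.prems by auto
    hence wa: "w < a" using wd by (metis dvd_imp_le le_neq_implies_less)
    obtain cs where cs: "cs \<noteq> []" "hd cs = m" "last cs = w" "successively (covers S) cs"
      "sorted_wrt (<) cs" "\<forall>z\<in>set cs. m dvd z \<and> z dvd w \<and> z \<in> S"
      using less.IH[OF wa wd(3) w(2)] by blast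
    have "\<forall>z\<in>set cs. z < a"
      using cs(6) wd pos wa by (metis dvd_imp_le le_less_trans)
    then show ?thesis
      using cs w less.prems wd
      by (intro exI[of _ "cs @ [a]"])
        (auto simp: successively_append_iff sorted_wrt_append intro: dvd_trans)
  qed
qed

text \<open>
  With \<open>m = gcd a b\<close>, the cycle runs from \<open>y\<close> down through \<open>a\<close> to \<open>m\<close> and back up through
  \<open>b\<close>; the two chains meet only in \<open>m\<close>, since a common element divides \<open>gcd a b\<close>.
\<close>
lemma hasse_has_cycle_if_two_lower_covers:
  assumes gc: "gcd_closed S" and fin: "finite S" and pos: "\<forall>x\<in>S. x > 0"
    and ca: "covers S a y" and cb: "covers S b y" and "a \<noteq> b"
  shows "hasse_has_cycle S"
proof -
  define m where "m = gcd a b"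
  have aS: "a \<in> S" and bS: "b \<in> S" and ay: "a \<noteq> y" "a dvd y" and b_y: "b \<noteq> y" "b dvd y"
    using ca cb by (auto simp: covers_def)
  have mS: "m \<in> S" using gc aS bS unfolding gcd_closed_def m_def by blast
  have "\<not> a dvd b" using ca bS \<open>a \<noteq> b\<close> b_y by (auto simp: covers_def)
  hence "m \<noteq> a" unfolding m_def by (metis gcd_dvd2)
  have "\<not> b dvd a" using cb aS \<open>a \<noteq> b\<close> ay by (auto simp: covers_def)
  hence "m \<noteq> b" unfolding m_def by (metis gcd_dvd1)
  obtain A where A: "A \<noteq> []" "hd A = m" "last A = a" "successively (covers S) A"
      "sorted_wrt (<) A" "\<forall>z\<in>set A. m dvd z \<and> z dvd a"
    using exists_covers_chain[OF fin pos mS aS] unfolding m_def by auto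
  obtain B where B: "B \<noteq> []" "hd B = m" "last B = b" "successively (covers S) B"
      "sorted_wrt (<) B" "\<forall>z\<in>set B. m dvd z \<and> z dvd b"
    using exists_covers_chain[OF fin pos mS bS] unfolding m_def by auto
  obtain B' where BB: "B = m # B'" using B by (cases B) auto
  have "B' \<noteq> []" using BB B \<open>m \<noteq> b\<close> by auto
  define vs where "vs = y # rev A @ B'"
  have "y \<notin> set A" using A ay dvd_antisym by blast
  moreover have "y \<notin> set B'" using B BB b_y dvd_antisym by auto
  moreover have "set A \<inter> set B' = {}"
  proof -
    have "z = m" if "z \<in> set A" "z \<in> set B'" for z
      using that A B BB unfolding m_def by (auto intro: dvd_antisym)
    moreover have "m \<notin> set B'" using B(5) BB by auto
    ultimately show ?thesis by blast
  qed
  moreover have "distinct A" "distinct B'" using A(5) B(5) BB by (auto simp: strict_sorted_iff)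
  ultimately have dist: "distinct vs" unfolding vs_def by auto
  have "length A \<ge> 1" "length B' \<ge> 1" using A(1) \<open>B' \<noteq> []\<close> by (simp_all add: Suc_leI)
  hence len: "length vs \<ge> 3" unfolding vs_def by simp
  have "successively (\<lambda>x y. hasse_adj S y x) A"
    by (rule successively_mono[OF A(4)]) (simp add: hasse_adj_def)
  hence "successively (hasse_adj S) (rev A)" by simp
  moreover have "covers S m (hd B') \<and> successively (covers S) B'"
    using B(4) BB \<open>B' \<noteq> []\<close> by (simp add: successively_Cons)
  moreover have "successively (covers S) B' \<Longrightarrow> successively (hasse_adj S) B'"
    by (erule successively_mono) (simp add: hasse_adj_def)
  ultimately have "successively (hasse_adj S) (rev A @ B')"
    using A(1,2) \<open>B' \<noteq> []\<close> by (simp add: successively_append_iff last_rev hasse_adj_def)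
  hence succ: "successively (hasse_adj S) vs"
    unfolding vs_def using ca A(1,3) by (simp add: successively_Cons hd_rev hasse_adj_def)
  have closing: "hasse_adj S (last vs) (hd vs)"
    unfolding vs_def using B(3) BB \<open>B' \<noteq> []\<close> cb by (simp add: hasse_adj_def)
  show ?thesis unfolding hasse_has_cycle_def
    using successively_cyclic_nth[OF succ closing] dist len by (intro exI[of _ vs]) (simp add: vs_def)
qed

lemma lower_cover_unique:
  assumes "gcd_closed S" "finite S" "\<forall>x\<in>S. x > 0" "\<not> hasse_has_cycle S"
    and "covers S a y" "covers S b y"
  shows "a = b"
  using hasse_has_cycle_if_two_lower_covers assms by blast

subsection \<open>The divisor weights of a tree\<close>

abbreviation proper_divisors_in :: "nat set \<Rightarrow> nat \<Rightarrow> nat set" where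
  "proper_divisors_in S y \<equiv> {z\<in>S. z dvd y \<and> z \<noteq> y}"

lemma Max_proper_divisors_in:
  assumes gc: "gcd_closed S" and fin: "finite S" and pos: "\<forall>x\<in>S. x > 0"
    and nc: "\<not> hasse_has_cycle S" and "y \<in> S" and ne: "proper_divisors_in S y \<noteq> {}"
  shows "Max (proper_divisors_in S y) \<in> proper_divisors_in S y"
    and "\<And>z. z \<in> proper_divisors_in S y \<Longrightarrow> z dvd Max (proper_divisors_in S y)"
proof -
  let ?P = "proper_divisors_in S y"
  have finP: "finite ?P" using fin by auto
  show pP: "Max ?P \<in> ?P" using Max_in[OF finP ne] .
  obtain c where c: "covers S c y" "Max ?P dvd c"
    using exists_lower_cover_above[OF fin pos \<open>y \<in> S\<close>] pP by blast
  have "c \<in> ?P" using c by (auto simp: covers_def)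
  hence "c \<le> Max ?P" using finP by simp
  moreover have "Max ?P \<le> c" using c pos by (auto simp: covers_def intro: dvd_imp_le)
  ultimately have cover: "covers S (Max ?P) y" using c by simp
  fix z assume "z \<in> ?P"
  then obtain c' where "covers S c' y" "z dvd c'"
    using exists_lower_cover_above[OF fin pos \<open>y \<in> S\<close>] by blast
  with lower_cover_unique[OF gc fin pos nc _ cover] show "z dvd Max ?P" by blast
qed

text \<open>For a non-minimal \<open>y\<close>, the maximum of its proper divisors is its unique lower cover.\<close>
definition tree_weight :: "nat set \<Rightarrow> nat \<Rightarrow> real" where
  "tree_weight S y = 1 / real y -
     (if proper_divisors_in S y = {} then 0 else 1 / real (Max (proper_divisors_in S y)))"

lemma tree_weight_nonzero:
  assumes "gcd_closed S" "finite S" "\<forall>x\<in>S. x > 0" "\<not> hasse_has_cycle S" "y \<in> S"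
  shows "tree_weight S y \<noteq> 0"
proof (cases "proper_divisors_in S y = {}")
  case True
  then have "tree_weight S y = 1 / real y" by (simp only: tree_weight_def if_True) simp
  then show ?thesis using assms by simp
next
  case False
  let ?p = "Max (proper_divisors_in S y)"
  have "?p \<in> S" "?p \<noteq> y" using Max_proper_divisors_in(1)[OF assms False] by auto
  hence "1 / real y \<noteq> 1 / real ?p" using assms by (simp add: field_simps)
  moreover have "tree_weight S y = 1 / real y - 1 / real ?p"
    using False by (simp only: tree_weight_def if_False)
  ultimately show ?thesis by simp
qed

lemma sum_tree_weight_divisors:
  assumes gc: "gcd_closed S" and fin: "finite S" and pos: "\<forall>x\<in>S. x > 0"
    and nc: "\<not> hasse_has_cycle S"
  shows "y \<in> S \<Longrightarrow> (\<Sum>z\<in>{z\<in>S. z dvd y}. tree_weight S z) = 1 / real y"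
proof (induction y rule: less_induct)
  case (less y)
  let ?P = "proper_divisors_in S y"
  have "{z\<in>S. z dvd y} = insert y ?P" using less.prems by auto
  hence sum: "(\<Sum>z\<in>{z\<in>S. z dvd y}. tree_weight S z) = tree_weight S y + (\<Sum>z\<in>?P. tree_weight S z)"
    using fin by simp
  show ?case
  proof (cases "?P = {}")
    case True
    then have "tree_weight S y = 1 / real y" by (simp only: tree_weight_def if_True) simp
    then show ?thesis using sum by (simp only: True sum.empty)
  next
    case False
    define p where "p = Max ?P"
    have pP: "p \<in> ?P" and dvd_p: "\<And>z. z \<in> ?P \<Longrightarrow> z dvd p"
      using Max_proper_divisors_in[OF gc fin pos nc less.prems False] unfolding p_def by auto
    have "y > 0" using pos less.prems by auto
    hence "p < y" using pP by (auto intro: le_neq_implies_less dvd_imp_le)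
    have "?P = {z\<in>S. z dvd p}"
    proof
      show "?P \<subseteq> {z\<in>S. z dvd p}" using dvd_p by auto
      have "z \<le> p" if "z \<in> S" "z dvd p" for z using that pP pos by (auto intro: dvd_imp_le)
      then show "{z\<in>S. z dvd p} \<subseteq> ?P" using pP \<open>p < y\<close> by (auto intro: dvd_trans)
    qed
    hence "(\<Sum>z\<in>?P. tree_weight S z) = 1 / real p"
      using less.IH[OF \<open>p < y\<close>] pP by auto
    moreover have "tree_weight S y = 1 / real y - 1 / real p"
      using False by (simp only: tree_weight_def if_False p_def)
    ultimately show ?thesis using sum by simp
  qed
qed

subsection \<open>Factorization of the LCM matrix\<close>

lemma lcm_matrix_eq_mat:
  "lcm_matrix S = mat (card S) (card S)
     (\<lambda>(i, j). real (lcm (sorted_list_of_set S ! i) (sorted_list_of_set S ! j)))"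
  unfolding lcm_matrix_def Let_def by simp

lemma real_lcm_eq_mult_div_gcd: "real (lcm a b) = real a * real b / real (gcd a b)"
proof (cases "gcd a b = 0")
  case False
  have "real a * real b = real (gcd a b) * real (lcm a b)"
    by (metis prod_gcd_lcm_nat of_nat_mult)
  with False show ?thesis by (simp add: field_simps)
qed simp

lemma lcm_matrix_eq_divisor_factorization:
  fixes f :: "nat \<Rightarrow> real"
  assumes fin: "finite S" and gc: "gcd_closed S"
    and weights: "\<And>y. y \<in> S \<Longrightarrow> (\<Sum>z\<in>{z\<in>S. z dvd y}. f z) = 1 / real y"
  defines "xs \<equiv> sorted_list_of_set S" and "n \<equiv> card S"
  shows "lcm_matrix S =
    mat n n (\<lambda>(i, k). if xs!k dvd xs!i then real (xs!i) * f (xs!k) else 0) *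
    mat n n (\<lambda>(k, j). if xs!k dvd xs!j then real (xs!j) else 0)"
    (is "_ = ?C * ?R")
proof (rule eq_matI)
  show "dim_row (lcm_matrix S) = dim_row (?C * ?R)" "dim_col (lcm_matrix S) = dim_col (?C * ?R)"
    by (simp_all add: lcm_matrix_eq_mat n_def)
  fix i j assume "i < dim_row (?C * ?R)" "j < dim_col (?C * ?R)"
  hence i: "i < n" and j: "j < n" by auto
  have len: "length xs = n" and set_xs: "set xs = S" and "distinct xs"
    using fin by (simp_all add: xs_def n_def)
  hence xs_in: "xs!i \<in> S" "xs!j \<in> S" using i j nth_mem by blast+
  let ?g = "gcd (xs!i) (xs!j)"
  let ?F = "\<lambda>z. if z dvd ?g then real (xs!i) * real (xs!j) * f z else 0"
  have "(?C * ?R) $$ (i, j) = (\<Sum>k<n. ?C $$ (i, k) * ?R $$ (k, j))"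
    using i j by (simp add: scalar_prod_def lessThan_atLeast0)
  also have "\<dots> = (\<Sum>k<n. ?F (xs!k))"
    using i j by (intro sum.cong) auto
  also have "\<dots> = (\<Sum>z\<in>S. ?F z)"
    using sum.reindex_bij_betw[OF bij_betw_nth[OF \<open>distinct xs\<close> _ set_xs[symmetric]], where g = ?F] len
    by simp
  also have "\<dots> = real (xs!i) * real (xs!j) * (\<Sum>z\<in>{z\<in>S. z dvd ?g}. f z)"
    using fin by (simp add: sum.inter_filter[symmetric] sum_distrib_left)
  also have "\<dots> = real (lcm (xs!i) (xs!j))"
    using weights[of ?g] gc xs_in by (simp add: gcd_closed_def real_lcm_eq_mult_div_gcd)
  finally show "lcm_matrix S $$ (i, j) = (?C * ?R) $$ (i, j)"
    using i j by (simp add: lcm_matrix_eq_mat xs_def n_def)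
qed

lemma index_le_if_nth_dvd:
  fixes xs :: "nat list"
  assumes "sorted_wrt (<) xs" "\<forall>x\<in>set xs. x > 0"
    and "i < length xs" "k < length xs" "xs!k dvd xs!i"
  shows "k \<le> i"
proof (rule ccontr)
  assume "\<not> k \<le> i"
  hence "xs!i < xs!k" using assms(1,4) sorted_wrt_nth_less by (simp add: not_le)
  moreover have "xs!k \<le> xs!i" using assms(2,3,5) nth_mem dvd_imp_le by metis
  ultimately show False by simp
qed

lemma prod_list_diag_mat_nonzero:
  assumes "A \<in> carrier_mat n n" "\<And>i. i < n \<Longrightarrow> A $$ (i, i) \<noteq> (0 :: 'a :: semidom)"
  shows "prod_list (diag_mat A) \<noteq> 0"
  using assms by (auto simp: prod_list_zero_iff diag_mat_def)

lemma invertible_mat_if_det_nonzero: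
  assumes A: "A \<in> carrier_mat n n" and "det A \<noteq> (0 :: 'a :: field)"
  shows "invertible_mat A"
proof -
  have "A \<in> Units (ring_mat TYPE('a) n ())" by (rule det_non_zero_imp_unit[OF assms])
  then obtain B where "B \<in> carrier_mat n n" "B * A = 1\<^sub>m n" "A * B = 1\<^sub>m n"
    unfolding Units_def ring_mat_def by auto
  with A show ?thesis unfolding invertible_mat_def inverts_mat_def by auto
qed

lemma lcm_matrix_invertible_if_divisor_weights:
  fixes f :: "nat \<Rightarrow> real"
  assumes fin: "finite S" and pos: "\<forall>x\<in>S. x > 0" and gc: "gcd_closed S"
    and weights: "\<And>y. y \<in> S \<Longrightarrow> (\<Sum>z\<in>{z\<in>S. z dvd y}. f z) = 1 / real y"
    and nonzero: "\<And>y. y \<in> S \<Longrightarrow> f y \<noteq> 0"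
  shows "invertible_mat (lcm_matrix S)"
proof -
  define xs where "xs = sorted_list_of_set S"
  define n where "n = card S"
  define C where "C = mat n n (\<lambda>(i, k). if xs!k dvd xs!i then real (xs!i) * f (xs!k) else 0)"
  define R where "R = mat n n (\<lambda>(k, j). if xs!k dvd xs!j then real (xs!j) else 0)"
  have CR: "lcm_matrix S = C * R"
    unfolding C_def R_def xs_def n_def by (rule lcm_matrix_eq_divisor_factorization[OF fin gc weights])
  have C: "C \<in> carrier_mat n n" and R: "R \<in> carrier_mat n n" by (simp_all add: C_def R_def)
  have len: "length xs = n" and "sorted_wrt (<) xs" and xs_S: "set xs = S"
    using fin by (simp_all add: xs_def n_def)
  hence order: "\<And>i k. i < n \<Longrightarrow> k < n \<Longrightarrow> xs!k dvd xs!i \<Longrightarrow> k \<le> i"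
    using index_le_if_nth_dvd pos by blast
  have xs_in: "\<And>i. i < n \<Longrightarrow> xs!i \<in> S" using len xs_S nth_mem by blast
  hence xs_nonzero: "\<And>i. i < n \<Longrightarrow> real (xs!i) \<noteq> 0" using pos by fastforce
  have "det C = prod_list (diag_mat C)"
  proof (rule det_lower_triangular[OF _ C])
    fix i j assume "i < j" "j < n"
    then show "C $$ (i, j) = 0" using order[of i j] by (auto simp: C_def)
  qed
  also have "\<dots> \<noteq> 0"
  proof (rule prod_list_diag_mat_nonzero[OF C])
    fix i assume "i < n"
    then show "C $$ (i, i) \<noteq> 0" using xs_nonzero nonzero[OF xs_in] by (simp add: C_def)
  qed
  finally have "det C \<noteq> 0" .
  have "upper_triangular R"
    unfolding upper_triangular_def
  proof (intro allI impI)
    fix i j assume "i < dim_row R" "j < i"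
    then show "R $$ (i, j) = 0" using order[of j i] R by (auto simp: R_def)
  qed
  hence "det R = prod_list (diag_mat R)" using det_upper_triangular R by blast
  also have "\<dots> \<noteq> 0"
    using xs_nonzero by (intro prod_list_diag_mat_nonzero[OF R]) (simp add: R_def)
  finally have "det R \<noteq> 0" .
  with \<open>det C \<noteq> 0\<close> have "det (lcm_matrix S) \<noteq> 0" by (simp add: CR det_mult[OF C R])
  moreover have "lcm_matrix S \<in> carrier_mat n n" unfolding CR using C R by (rule mult_carrier_mat)
  ultimately show ?thesis using invertible_mat_if_det_nonzero by blast
qed

theorem corollary4p6:
  fixes S :: "nat set"
  assumes "finite S" and "\<forall>x\<in>S. x > 0" and "gcd_closed S" and "wedge_tree_set S"
  shows "invertible_mat (lcm_matrix S)"
proof -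
  have acyclic: "\<not> hasse_has_cycle S"
    using assms(3,4) by (simp add: wedge_tree_set_def hasse_is_tree_def meet_closure_gcd_closed)
  show ?thesis
  proof (rule lcm_matrix_invertible_if_divisor_weights[OF assms(1-3)])
    fix y assume "y \<in> S"
    then show "(\<Sum>z\<in>{z\<in>S. z dvd y}. tree_weight S z) = 1 / real y"
      and "tree_weight S y \<noteq> 0"
      using sum_tree_weight_divisors tree_weight_nonzero assms(1-3) acyclic by blast+
  qed
qed

end
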